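(* Let $m,n\ge 0$ be integers with $m-n\equiv 1\pmod 2$, put $N=m+n$ and $k=\frac{N-1}{2}$. Let $1\le p,q,r<\infty$ satisfy $\frac1r=\frac1p+\frac1q-1$. Then $$\left(\frac{2}{r+1}+\binom{N}{k}^r+\sum_{\substack{j=0\\ j\ne k}}^{N-1}\frac{\binom{N}{j+1}^{r+1}-\binom{N}{j}^{r+1}}{(r+1)\left[\binom{N}{j+1}-\binom{N}{j}\right]}\right)^{1/r} \le \Big(\sum_{j=0}^{m}\binom{m}{j}^q\Big)^{1/q}\Big(\sum_{j=0}^{n}\binom{n}{j}^p\Big)^{1/p}.$$
   Context: Binomial coefficients have their usual meaning. *)

theory Defs
  imports Complex_Main
begin

end

theory Submission
  imports Defs "HOL-Analysis.Analysis"
begin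

text \<open>
  Each summand over \<open>j \<noteq> k\<close> is the mean value of \<open>t powr r\<close> between two consecutive
  binomial coefficients, so by convexity (Hermite--Hadamard) it is at most the trapezoid value.
  Since the two middle entries of an odd row agree and its end entries are 1, the left-hand side
  is therefore bounded by the \<open>\<ell>\<^sup>r\<close> norm of the row of \<open>N\<close>. By Vandermonde's identity that row
  is the convolution of the rows of \<open>m\<close> and \<open>n\<close>, and the discrete Young inequality
  \<open>\<parallel>f * g\<parallel>\<^sub>r \<le> \<parallel>f\<parallel>\<^sub>q \<parallel>g\<parallel>\<^sub>p\<close>, a consequence of Hoelder's inequality with the three exponents
  \<open>1/r\<close>, \<open>1 - 1/p\<close>, \<open>1 - 1/q\<close>, finishes the proof.
\<close>

text \<open>The mean of \<open>t\<^sup>r\<close> over the interval between \<open>a\<close> and \<open>b\<close>; it is \<open>0\<close> when \<open>a = b\<close>.\<close>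

definition powr_mean :: "real \<Rightarrow> real \<Rightarrow> real \<Rightarrow> real" where
  "powr_mean r a b = (b powr (r + 1) - a powr (r + 1)) / ((r + 1) * (b - a))"

lemma powr_mean_commute: "powr_mean r a b = powr_mean r b a"
proof -
  have "(b powr (r + 1) - a powr (r + 1)) / ((r + 1) * (b - a))
      = (- (a powr (r + 1) - b powr (r + 1))) / (- ((r + 1) * (a - b)))"
    by (simp add: algebra_simps)
  then show ?thesis
    unfolding powr_mean_def minus_divide_divide .
qed

lemma powr_mean_nonneg:
  assumes "0 < a" "0 < b" "r \<ge> 0"
  shows "powr_mean r a b \<ge> 0"
proof (cases a b rule: linorder_cases)
  case less
  then have "a powr (r + 1) < b powr (r + 1)"
    using assms by (intro powr_less_mono2) auto
  then show ?thesis
    unfolding powr_mean_def using less assms by (intro divide_nonneg_pos) auto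
next
  case greater
  then have "b powr (r + 1) < a powr (r + 1)"
    using assms by (intro powr_less_mono2) auto
  then show ?thesis
    unfolding powr_mean_def using greater assms
    by (intro divide_nonpos_neg) (auto simp: mult_pos_neg)
qed (simp add: powr_mean_def)

lemma powr_above_tangent:
  fixes x y r :: real
  assumes "x > 0" "y > 0" "r \<ge> 1"
  shows "x powr r - y powr r \<ge> r * y powr (r - 1) * (x - y)"
  using assms
  by (intro convex_on_imp_above_tangent[where A = "{0<..}"] powr_convex)
     (auto intro!: derivative_eq_intros simp: interior_open)

lemma powr_mean_le_trapezoid:
  fixes a b r :: real
  assumes "0 < a" "0 < b" "r \<ge> 1"
  shows "powr_mean r a b \<le> (a powr r + b powr r) / 2"
proof -
  have ordered: "powr_mean r a b \<le> (a powr r + b powr r) / 2" if "0 < a" "a < b" for a b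
  proof -
    \<comment> \<open>\<open>\<phi> x \<ge> 0\<close> is the claim on \<open>[a, x]\<close>; \<open>\<phi>'\<close> is non-negative by the tangent inequality.\<close>
    define \<phi> where "\<phi> x = (r + 1) * (x - a) * (a powr r + x powr r) - 2 * (x powr (r + 1) - a powr (r + 1))"
      for x
    have "\<phi> a \<le> \<phi> b"
    proof (rule DERIV_nonneg_imp_increasing_open[of a b \<phi>])
      show "a \<le> b"
        using that by simp
    next
      fix x assume "a < x" "x < b"
      then have "x > 0"
        using that by simp
      then have "(\<phi> has_real_derivative
          (r + 1) * ((a powr r - x powr r) - r * x powr (r - 1) * (a - x))) (at x)"
        unfolding \<phi>_def by (auto intro!: derivative_eq_intros simp: algebra_simps)
      moreover have "(a powr r - x powr r) - r * x powr (r - 1) * (a - x) \<ge> 0"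
        using powr_above_tangent[of a x r] \<open>x > 0\<close> that assms(3) by simp
      ultimately show "\<exists>y. (\<phi> has_real_derivative y) (at x) \<and> 0 \<le> y"
        using assms(3) by auto
    next
      show "continuous_on {a..b} \<phi>"
        unfolding \<phi>_def using that by (intro continuous_intros) auto
    qed
    then have "2 * (b powr (r + 1) - a powr (r + 1)) \<le> (r + 1) * (b - a) * (a powr r + b powr r)"
      by (simp add: \<phi>_def)
    moreover have "(r + 1) * (b - a) > 0"
      using that assms(3) by simp
    ultimately show ?thesis
      unfolding powr_mean_def by (simp add: divide_le_eq field_simps)
  qed
  show ?thesis
  proof (cases a b rule: linorder_cases)
    case greater
    then show ?thesis
      using ordered[of b a] assms by (simp add: powr_mean_commute add.commute)
  qed (use ordered assms in \<open>auto simp: powr_mean_def\<close>)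
qed

lemma sum_powr_mean_le_trapezoid:
  fixes c :: "nat \<Rightarrow> real"
  assumes pos: "\<And>j. j \<le> N \<Longrightarrow> c j > 0" and "k < N" "c (Suc k) = c k" "r \<ge> 1"
  shows "c k powr r + (\<Sum>j\<in>{..<N} - {k}. powr_mean r (c j) (c (Suc j)))
           \<le> (\<Sum>j\<le>N. c j powr r) - (c 0 powr r + c N powr r) / 2"
proof -
  define t where "t j = (c j powr r + c (Suc j) powr r) / 2" for j
  have "(\<Sum>j\<in>{..<N} - {k}. powr_mean r (c j) (c (Suc j))) \<le> (\<Sum>j\<in>{..<N} - {k}. t j)"
    unfolding t_def using pos assms(4) by (intro sum_mono powr_mean_le_trapezoid) auto
  also have "\<dots> = (\<Sum>j<N. t j) - c k powr r"
    using assms(2,3) by (simp add: sum_diff1 t_def)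
  also have "(\<Sum>j<N. t j) = ((\<Sum>j<N. c j powr r) + (\<Sum>j<N. c (Suc j) powr r)) / 2"
    by (simp add: t_def sum.distrib flip: sum_divide_distrib)
  also have "(\<Sum>j<N. c j powr r) = (\<Sum>j\<le>N. c j powr r) - c N powr r"
    by (simp flip: lessThan_Suc_atMost)
  also have "(\<Sum>j<N. c (Suc j) powr r) = (\<Sum>j\<le>N. c j powr r) - c 0 powr r"
    using sum.lessThan_Suc_shift[of "\<lambda>j. c j powr r" N] by (simp add: lessThan_Suc_atMost)
  finally show ?thesis
    by (simp add: field_simps)
qed

lemma mult_eq_powr_split_young_exponents:
  fixes x y p q r :: real
  assumes "x \<ge> 0" "y \<ge> 0" "p \<noteq> 0" "q \<noteq> 0" "1 / r = 1 / p + 1 / q - 1"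
  shows "x * y = (x powr q * y powr p) powr (1/r) * (x powr q) powr (1 - 1/p) * (y powr p) powr (1 - 1/q)"
proof (cases "x = 0 \<or> y = 0")
  case False
  then have pos: "x > 0" "y > 0"
    using assms by auto
  have "(x powr q * y powr p) powr (1/r) * (x powr q) powr (1 - 1/p) * (y powr p) powr (1 - 1/q)
      = x powr (q/r + q * (1 - 1/p)) * y powr (p/r + p * (1 - 1/q))"
    using pos by (simp add: powr_mult powr_powr powr_add)
  moreover have "q/r + q * (1 - 1/p) = 1" "p/r + p * (1 - 1/q) = 1"
    using assms by (simp_all add: field_simps)
  ultimately show ?thesis
    using pos by simp
qed auto

lemma weighted_amgm3:
  fixes x y z \<alpha> \<beta> \<gamma> :: real
  assumes "x \<ge> 0" "y \<ge> 0" "z \<ge> 0" "\<alpha> \<ge> 0" "\<beta> \<ge> 0" "\<gamma> \<ge> 0" "\<alpha> + \<beta> + \<gamma> = 1"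
  shows "x powr \<alpha> * y powr \<beta> * z powr \<gamma> \<le> \<alpha> * x + \<beta> * y + \<gamma> * z"
proof (cases "x > 0 \<and> y > 0 \<and> z > 0")
  case True
  define w where "w = (\<lambda>i::nat. if i = 0 then \<alpha> else if i = 1 then \<beta> else \<gamma>)"
  define v where "v = (\<lambda>i::nat. if i = 0 then x else if i = 1 then y else z)"
  have "(\<Sum>i\<in>{0,1,2}. w i * ln (v i)) \<le> ln (\<Sum>i\<in>{0,1,2}. w i *\<^sub>R v i)"
    using True assms by (intro concave_on_sum[OF _ _ ln_concave]) (auto simp: w_def v_def)
  then have "\<alpha> * ln x + \<beta> * ln y + \<gamma> * ln z \<le> ln (\<alpha> * x + \<beta> * y + \<gamma> * z)"
    by (simp add: w_def v_def add.assoc)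
  moreover have "0 < \<alpha> * x + \<beta> * y + \<gamma> * z"
    using True assms by (smt (verit) mult_pos_pos mult_nonneg_nonneg)
  ultimately show ?thesis
    using True by (simp add: powr_def ln_ge_iff flip: exp_add)
next
  case False
  then have "x = 0 \<or> y = 0 \<or> z = 0"
    using assms by auto
  then show ?thesis
    using assms by auto
qed

lemma holder_sum3:
  fixes a b c :: "'i \<Rightarrow> real" and \<alpha> \<beta> \<gamma> :: real
  assumes "\<And>i. i \<in> I \<Longrightarrow> a i \<ge> 0" "\<And>i. i \<in> I \<Longrightarrow> b i \<ge> 0" "\<And>i. i \<in> I \<Longrightarrow> c i \<ge> 0"
    and "\<alpha> \<ge> 0" "\<beta> \<ge> 0" "\<gamma> \<ge> 0" "\<alpha> + \<beta> + \<gamma> = 1"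
  shows "(\<Sum>i\<in>I. a i powr \<alpha> * b i powr \<beta> * c i powr \<gamma>)
           \<le> sum a I powr \<alpha> * sum b I powr \<beta> * sum c I powr \<gamma>"
proof (cases "sum a I > 0 \<and> sum b I > 0 \<and> sum c I > 0")
  case True
  define A B C where "A = sum a I" and "B = sum b I" and "C = sum c I"
  have pos: "A > 0" "B > 0" "C > 0"
    using True by (simp_all add: A_def B_def C_def)
  define K where "K = A powr \<alpha> * B powr \<beta> * C powr \<gamma>"
  have "(\<Sum>i\<in>I. a i powr \<alpha> * b i powr \<beta> * c i powr \<gamma>)
      = (\<Sum>i\<in>I. K * ((a i / A) powr \<alpha> * (b i / B) powr \<beta> * (c i / C) powr \<gamma>))"
    using pos assms(1-3) unfolding K_def by (intro sum.cong) (auto simp: powr_divide)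
  also have "\<dots> \<le> (\<Sum>i\<in>I. K * (\<alpha> * (a i / A) + \<beta> * (b i / B) + \<gamma> * (c i / C)))"
    using pos assms unfolding K_def by (intro sum_mono mult_left_mono weighted_amgm3) auto
  also have "\<dots> = K * (\<alpha> * (A / A) + \<beta> * (B / B) + \<gamma> * (C / C))"
    unfolding sum_distrib_left[symmetric] sum.distrib
    by (simp add: A_def B_def C_def sum_divide_distrib[symmetric] sum_distrib_left[symmetric])
  also have "\<dots> = K"
    using pos assms by simp
  finally show ?thesis
    by (simp add: K_def A_def B_def C_def)
next
  case False
  have "sum a I \<ge> 0" "sum b I \<ge> 0" "sum c I \<ge> 0"
    using assms by (simp_all add: sum_nonneg)
  with False have "sum a I = 0 \<or> sum b I = 0 \<or> sum c I = 0"
    by linarith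
  then have "\<forall>i\<in>I. a i = 0 \<or> b i = 0 \<or> c i = 0" if "finite I"
    using that assms(1-3) by (auto simp: sum_nonneg_eq_0_iff)
  then have "(\<Sum>i\<in>I. a i powr \<alpha> * b i powr \<beta> * c i powr \<gamma>) = 0"
    by (cases "finite I") (auto intro: sum.neutral)
  then show ?thesis
    by simp
qed

lemma convolution_powr_le:
  fixes f g :: "nat \<Rightarrow> real" and p q r :: real
  assumes "\<And>i. f i \<ge> 0" "\<And>i. g i \<ge> 0"
    and "1 \<le> p" "1 \<le> q" "1 \<le> r" "1 / r = 1 / p + 1 / q - 1"
  shows "(\<Sum>i\<le>j. f i * g (j - i)) powr r
           \<le> (\<Sum>i\<le>j. f i powr q * g (j - i) powr p)
               * ((\<Sum>i\<le>j. f i powr q) powr (r - r/p) * (\<Sum>i\<le>j. g i powr p) powr (r - r/q))"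
proof -
  define S where "S = (\<Sum>i\<le>j. f i powr q * g (j - i) powr p)"
  define F where "F = (\<Sum>i\<le>j. f i powr q)"
  define G where "G = (\<Sum>i\<le>j. g (j - i) powr p)"
  have G_rev: "G = (\<Sum>i\<le>j. g i powr p)"
    using sum.atLeastAtMost_rev[of "\<lambda>i. g i powr p" 0 j] by (simp add: G_def atLeast0AtMost)
  have nonneg: "S \<ge> 0" "F \<ge> 0" "G \<ge> 0"
    by (simp_all add: S_def F_def G_def sum_nonneg)
  have "(\<Sum>i\<le>j. f i * g (j - i))
      = (\<Sum>i\<le>j. (f i powr q * g (j - i) powr p) powr (1/r)
                   * (f i powr q) powr (1 - 1/p) * (g (j - i) powr p) powr (1 - 1/q))"
    using assms by (intro sum.cong refl mult_eq_powr_split_young_exponents) auto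
  also have "\<dots> \<le> S powr (1/r) * F powr (1 - 1/p) * G powr (1 - 1/q)"
  proof -
    have "1/r \<ge> 0" "1 - 1/p \<ge> 0" "1 - 1/q \<ge> 0"
      using assms(3-5) by simp_all
    moreover have "1/r + (1 - 1/p) + (1 - 1/q) = 1"
      using assms(6) by simp
    ultimately show ?thesis
      unfolding S_def F_def G_def using assms by (intro holder_sum3) auto
  qed
  finally have "(\<Sum>i\<le>j. f i * g (j - i)) powr r
      \<le> (S powr (1/r) * F powr (1 - 1/p) * G powr (1 - 1/q)) powr r"
    using assms by (intro powr_mono2) (auto intro: sum_nonneg)
  also have "\<dots> = S * (F powr (r - r/p) * G powr (r - r/q))"
    using assms(5) nonneg by (simp add: powr_mult powr_powr right_diff_distrib mult.commute[of _ r])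
  finally show ?thesis
    by (simp add: S_def F_def G_rev)
qed

lemma young_convolution_inequality_truncated:
  fixes f g :: "nat \<Rightarrow> real" and p q r :: real
  assumes f: "\<And>i. f i \<ge> 0" and g: "\<And>i. g i \<ge> 0"
    and exps: "1 \<le> p" "1 \<le> q" "1 \<le> r" "1 / r = 1 / p + 1 / q - 1"
  shows "(\<Sum>j\<le>N. (\<Sum>i\<le>j. f i * g (j - i)) powr r)
           \<le> (\<Sum>i\<le>N. f i powr q) powr (r/q) * (\<Sum>i\<le>N. g i powr p) powr (r/p)"
proof -
  define F where "F = (\<Sum>i\<le>N. f i powr q)"
  define G where "G = (\<Sum>i\<le>N. g i powr p)"
  define K where "K = F powr (r - r/p) * G powr (r - r/q)"
  have F_G_nonneg: "F \<ge> 0" "G \<ge> 0"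
    by (simp_all add: F_def G_def sum_nonneg)
  have "(\<Sum>i\<le>j. f i * g (j - i)) powr r \<le> (\<Sum>i\<le>j. f i powr q * g (j - i) powr p) * K"
    if "j \<le> N" for j
  proof -
    have "r - r/p \<ge> 0" "r - r/q \<ge> 0"
      using exps by (simp_all add: field_simps)
    moreover have "(\<Sum>i\<le>j. f i powr q) \<le> F" "(\<Sum>i\<le>j. g i powr p) \<le> G"
      unfolding F_def G_def using that by (auto intro!: sum_mono2)
    ultimately have "(\<Sum>i\<le>j. f i powr q) powr (r - r/p) * (\<Sum>i\<le>j. g i powr p) powr (r - r/q) \<le> K"
      unfolding K_def by (intro mult_mono powr_mono2) (auto intro: sum_nonneg)
    then have "(\<Sum>i\<le>j. f i powr q * g (j - i) powr p)
        * ((\<Sum>i\<le>j. f i powr q) powr (r - r/p) * (\<Sum>i\<le>j. g i powr p) powr (r - r/q))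
        \<le> (\<Sum>i\<le>j. f i powr q * g (j - i) powr p) * K"
      by (intro mult_left_mono) (auto intro: sum_nonneg)
    then show ?thesis
      using convolution_powr_le[where f = f and g = g and j = j, OF f g exps] by linarith
  qed
  then have "(\<Sum>j\<le>N. (\<Sum>i\<le>j. f i * g (j - i)) powr r)
      \<le> (\<Sum>j\<le>N. (\<Sum>i\<le>j. f i powr q * g (j - i) powr p) * K)"
    by (intro sum_mono) auto
  also have "\<dots> = (\<Sum>(i, l) | i + l \<le> N. f i powr q * g l powr p) * K"
    by (simp add: sum_distrib_right sum.triangle_reindex_eq)
  also have "\<dots> \<le> (\<Sum>(i, l) \<in> {..N} \<times> {..N}. f i powr q * g l powr p) * K"
    unfolding K_def by (intro mult_right_mono sum_mono2) auto
  also have "\<dots> = F powr 1 * G powr 1 * K"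
    using F_G_nonneg by (simp add: F_def G_def sum_product sum.cartesian_product)
  also have "\<dots> = F powr (1 + (r - r/p)) * G powr (1 + (r - r/q))"
    by (simp add: K_def powr_add)
  also have "1 + (r - r/p) = r/q"
    using exps by (simp add: field_simps)
  also have "1 + (r - r/q) = r/p"
    using exps by (simp add: field_simps)
  finally show ?thesis
    by (simp add: F_def G_def)
qed

lemma trapezoid_sum_le_sum_choose_powr:
  fixes N k :: nat and r :: real
  assumes N: "N = Suc (2 * k)" and "r \<ge> 1"
  shows "2 / (r + 1) + real (N choose k) powr r
           + (\<Sum>j\<in>{..<N} - {k}. powr_mean r (N choose j) (N choose Suc j))
         \<le> (\<Sum>j\<le>N. real (N choose j) powr r)"
proof -
  have "real (N choose Suc k) = real (N choose k)"
    using binomial_symmetric[of k N] N by simp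
  then have "real (N choose k) powr r + (\<Sum>j\<in>{..<N} - {k}. powr_mean r (N choose j) (N choose Suc j))
      \<le> (\<Sum>j\<le>N. real (N choose j) powr r) - 1"
    using sum_powr_mean_le_trapezoid[of N "\<lambda>j. real (N choose j)" k r] N assms(2) by simp
  moreover have "2 / (r + 1) \<le> 1"
    using assms(2) by simp
  ultimately show ?thesis
    by simp
qed

lemma sum_choose_powr_le_young:
  fixes m n :: nat and p q r :: real
  assumes "1 \<le> p" "1 \<le> q" "1 \<le> r" "1 / r = 1 / p + 1 / q - 1"
  shows "(\<Sum>j\<le>m + n. real (m + n choose j) powr r)
           \<le> (\<Sum>j=0..m. real (m choose j) powr q) powr (r/q) * (\<Sum>j=0..n. real (n choose j) powr p) powr (r/p)"
proof -
  have "(\<Sum>j\<le>m + n. real (m + n choose j) powr r)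
      \<le> (\<Sum>i\<le>m + n. real (m choose i) powr q) powr (r/q) * (\<Sum>i\<le>m + n. real (n choose i) powr p) powr (r/p)"
    using young_convolution_inequality_truncated[of "\<lambda>i. real (m choose i)" "\<lambda>i. real (n choose i)" p q r] assms
    by (simp flip: vandermonde of_nat_mult)
  also have "(\<Sum>i\<le>m + n. real (m choose i) powr q) = (\<Sum>j=0..m. real (m choose j) powr q)"
    by (intro sum.mono_neutral_right) auto
  also have "(\<Sum>i\<le>m + n. real (n choose i) powr p) = (\<Sum>j=0..n. real (n choose j) powr p)"
    by (intro sum.mono_neutral_right) auto
  finally show ?thesis .
qed

theorem mainTheorem12:
  fixes m n :: nat and p q r :: real
  assumes "odd (m + n)"
    and "1 \<le> p" and "1 \<le> q" and "1 \<le> r"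
    and "1 / r = 1 / p + 1 / q - 1"
  shows "(let N = m + n; k = (N - 1) div 2 in
          (2 / (r + 1) + real (N choose k) powr r
           + (\<Sum>j\<in>{0..N-1} - {k}.
                (real (N choose (j+1)) powr (r+1) - real (N choose j) powr (r+1))
                / ((r + 1) * (real (N choose (j+1)) - real (N choose j)))))
          powr (1 / r))
     \<le> (\<Sum>j=0..m. real (m choose j) powr q) powr (1 / q)
        * (\<Sum>j=0..n. real (n choose j) powr p) powr (1 / p)"
proof -
  define N where "N = m + n"
  define k where "k = (N - 1) div 2"
  define T where "T = 2 / (r + 1) + real (N choose k) powr r
    + (\<Sum>j\<in>{..<N} - {k}. powr_mean r (N choose j) (N choose Suc j))"
  define A where "A = (\<Sum>j=0..m. real (m choose j) powr q)"
  define B where "B = (\<Sum>j=0..n. real (n choose j) powr p)"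
  have N_eq: "N = Suc (2 * k)"
    using assms(1) by (auto simp: N_def k_def elim!: oddE)
  have "T \<le> A powr (r/q) * B powr (r/p)"
    using trapezoid_sum_le_sum_choose_powr[OF N_eq assms(4)] sum_choose_powr_le_young[where m = m and n = n, OF assms(2-5)]
    unfolding T_def A_def B_def N_def by linarith
  moreover have "T \<ge> 0"
    unfolding T_def using assms(4) by (intro add_nonneg_nonneg sum_nonneg powr_mean_nonneg) auto
  ultimately have "T powr (1/r) \<le> (A powr (r/q) * B powr (r/p)) powr (1/r)"
    using assms(4) by (intro powr_mono2) auto
  also have "\<dots> = A powr (1/q) * B powr (1/p)"
    using assms(4) by (simp add: A_def B_def powr_mult powr_powr sum_nonneg)
  finally have "T powr (1/r) \<le> A powr (1/q) * B powr (1/p)" .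
  moreover have "{0..N-1} = {..<N}"
    using N_eq by auto
  ultimately show ?thesis
    unfolding Let_def N_def[symmetric] k_def[symmetric] by (simp add: T_def A_def B_def powr_mean_def)
qed

end
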